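(* $$\mathrm{toi}(K_t \square K_s) = \begin{cases} t+s-1 &\text{ if } t, s\geq 2 \text{ and } \max\{s,t\} \geq 4\\ 4 &\text{ if } s=t=3\\ 3 &\text{ if } s=3 \text{ and } t=2 \end{cases}$$
   Context: $\mathrm{toi}(G)$ is the maximum $t$ such that $G$ contains a totally odd strong immersion of $K_t$ (an injective map of $V(K_t)$ into $V(G)$ with pairwise edge-disjoint odd paths joining each pair of terminals, no terminal being an interior vertex of any path). $G\square H$ is the Cartesian product: vertex set $V(G)\times V(H)$, with $(g_1,h_1)\sim(g_2,h_2)$ iff ($g_1=g_2$ and $h_1h_2\in E(H)$) or ($h_1=h_2$ and $g_1g_2\in E(G)$). *)

theory Defs
  imports Main
begin

text \<open>A finite simple graph is represented as a pair (V, E) of a vertex set and a set of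
  edges, each edge being a 2-element subset of V.\<close>

type_synonym 'a graph = "'a set \<times> 'a set set"

definition verts :: "'a graph \<Rightarrow> 'a set" where "verts G = fst G"
definition edges :: "'a graph \<Rightarrow> 'a set set" where "edges G = snd G"

definition complete_graph :: "nat \<Rightarrow> nat graph" where
  "complete_graph t = ({..<t}, {{i, j} | i j. i < t \<and> j < t \<and> i \<noteq> j})"

definition cart_prod :: "'a graph \<Rightarrow> 'b graph \<Rightarrow> ('a \<times> 'b) graph" where
  "cart_prod G H =
     (verts G \<times> verts H,
      {{(g1, h1), (g2, h2)} | g1 h1 g2 h2.
         g1 \<in> verts G \<and> g2 \<in> verts G \<and> h1 \<in> verts H \<and> h2 \<in> verts H \<and>
         ((g1 = g2 \<and> {h1, h2} \<in> edges H) \<or> (h1 = h2 \<and> {g1, g2} \<in> edges G))})"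

definition is_path :: "'a graph \<Rightarrow> 'a list \<Rightarrow> 'a \<Rightarrow> 'a \<Rightarrow> bool" where
  "is_path G p u v \<longleftrightarrow> p \<noteq> [] \<and> hd p = u \<and> last p = v \<and> distinct p \<and> set p \<subseteq> verts G \<and>
     (\<forall>i < length p - 1. {p ! i, p ! Suc i} \<in> edges G)"

definition path_edges :: "'a list \<Rightarrow> 'a set set" where
  "path_edges p = {{p ! i, p ! Suc i} | i. i < length p - 1}"

definition path_interior :: "'a list \<Rightarrow> 'a set" where
  "path_interior p = set (butlast (tl p))"

definition totally_odd_strong_immersion ::
    "'a graph \<Rightarrow> nat \<Rightarrow> (nat \<Rightarrow> 'a) \<Rightarrow> (nat \<Rightarrow> nat \<Rightarrow> 'a list) \<Rightarrow> bool" where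
  "totally_odd_strong_immersion G k \<pi> P \<longleftrightarrow>
     inj_on \<pi> {..<k} \<and> \<pi> ` {..<k} \<subseteq> verts G \<and>
     (\<forall>i j. i < j \<and> j < k \<longrightarrow>
        is_path G (P i j) (\<pi> i) (\<pi> j) \<and> odd (length (P i j) - 1) \<and>
        (\<forall>l < k. \<pi> l \<notin> path_interior (P i j))) \<and>
     (\<forall>i j i' j'. i < j \<and> j < k \<and> i' < j' \<and> j' < k \<and> (i, j) \<noteq> (i', j') \<longrightarrow>
        path_edges (P i j) \<inter> path_edges (P i' j') = {})"

definition has_toi :: "'a graph \<Rightarrow> nat \<Rightarrow> bool" where
  "has_toi G k \<longleftrightarrow> (\<exists>\<pi> P. totally_odd_strong_immersion G k \<pi> P)"

definition toi :: "'a graph \<Rightarrow> nat" where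
  "toi G = (GREATEST k. has_toi G k)"

end

theory Submission
  imports Defs
begin

text \<open>
  The paths of an immersion that end at a terminal leave it through distinct edges, so a
  terminal has degree at least k - 1; as K_t \<box> K_s is (t + s - 2)-regular, toi is at most t + s - 1.

  For s \<ge> 4 this bound is attained: take the first row and the first column as terminals.
  Terminals on a common line are adjacent; the terminals (0, i) and (a, 0) with i, a > 0 are
  joined by the path (0, i), (a, i), (a, i'), (a, 0), where i' is the cyclic successor of i
  among the columns 1, ..., s - 1. With at least three such columns no edge of row a is used twice.

  If the terminals have degree exactly k - 1, every edge at a terminal starts one of the paths.
  A path leaving a terminal through a non-terminal w continues to a further non-terminal
  neighbour of w, and different terminals lead to different such neighbours; so at most half
  of the neighbours of a non-terminal are terminals. For K_2 \<box> K_3 and k = 4 this is impossible.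
  For K_3 \<box> K_3 and k = 5 it forces the terminals to form a row plus a column and all
  non-adjacent terminals to be joined by paths of length 3 through the remaining 2 \<times> 2 block,
  and these four paths cannot be edge-disjoint.
\<close>

section \<open>Paths\<close>

lemma path_interior_iff_nth:
  "x \<in> path_interior p \<longleftrightarrow> (\<exists>i. 0 < i \<and> i < length p - 1 \<and> x = p ! i)"
proof
  assume "x \<in> path_interior p"
  then obtain i where "i < length p - 2" "x = p ! Suc i"
    by (auto simp: path_interior_def in_set_conv_nth nth_butlast nth_tl numeral_2_eq_2)
  then show "\<exists>i. 0 < i \<and> i < length p - 1 \<and> x = p ! i" by (intro exI[of _ "Suc i"]) auto
next
  assume "\<exists>i. 0 < i \<and> i < length p - 1 \<and> x = p ! i"
  then obtain i where "0 < i" "i < length p - 1" "x = p ! i" by blast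
  then show "x \<in> path_interior p"
    unfolding path_interior_def in_set_conv_nth
    by (intro exI[of _ "i - 1"]) (auto simp: nth_butlast nth_tl)
qed

lemma nth_in_path_edges: "i < length p - 1 \<Longrightarrow> {p ! i, p ! Suc i} \<in> path_edges p"
  unfolding path_edges_def by blast

lemma is_path_nth_edge: "is_path G p u v \<Longrightarrow> i < length p - 1 \<Longrightarrow> {p ! i, p ! Suc i} \<in> edges G"
  unfolding is_path_def by blast

lemma is_path_nth_0: "is_path G p u v \<Longrightarrow> p ! 0 = u"
  unfolding is_path_def using hd_conv_nth[of p] by auto

lemma is_path_nth_last: "is_path G p u v \<Longrightarrow> p ! (length p - 1) = v"
  unfolding is_path_def using last_conv_nth[of p] by auto

lemma rev_nth_edge:
  assumes "i < length p - 1"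
  shows "{rev p ! i, rev p ! Suc i} = {p ! (length p - 2 - i), p ! Suc (length p - 2 - i)}"
    and "length p - 2 - i < length p - 1"
  using assms by (auto simp: rev_nth Suc_diff_Suc numeral_2_eq_2)

lemma path_edges_rev: "path_edges (rev p) = path_edges p"
proof -
  have "path_edges (rev p) \<subseteq> path_edges p" for p :: "'a list"
    unfolding path_edges_def using rev_nth_edge by fastforce
  from this[of p] this[of "rev p"] show ?thesis by auto
qed

lemma is_path_rev: "is_path G p u v \<Longrightarrow> is_path G (rev p) v u"
  unfolding is_path_def by (auto simp: hd_rev last_rev rev_nth_edge(1) intro: rev_nth_edge(2))

lemma path_interior_rev: "path_interior (rev p) = path_interior p"
  unfolding path_interior_def by (metis butlast_rev butlast_tl rev_rev_ident set_rev)

lemma path_edges_conv_image: "path_edges p = (\<lambda>i. {p ! i, p ! Suc i}) ` {..<length p - 1}"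
  unfolding path_edges_def by auto

lemma path_edges_map: "path_edges (map f p) = (\<lambda>e. f ` e) ` path_edges p"
  unfolding path_edges_conv_image image_image by (intro image_cong) auto

lemma path_interior_map: "path_interior (map f p) = f ` path_interior p"
  unfolding path_interior_def by (simp flip: map_tl map_butlast)

lemma path_edges_subset: "e \<in> path_edges p \<Longrightarrow> e \<subseteq> set p"
  unfolding path_edges_def by auto

lemma path_interior_subset: "path_interior p \<subseteq> set p"
  unfolding path_interior_def by (cases p) (auto dest: in_set_butlastD)

lemma is_path_pair:
  "is_path G [x, y] u v \<longleftrightarrow> x = u \<and> y = v \<and> x \<noteq> y \<and> x \<in> verts G \<and> y \<in> verts G \<and> {x, y} \<in> edges G"
  by (auto simp: is_path_def)

lemma path_edges_pair: "path_edges [x, y] = {{x, y}}"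
  by (auto simp: path_edges_def)

lemma path_interior_pair: "path_interior [x, y] = {}"
  by (simp add: path_interior_def)

lemma is_path_four:
  "is_path G [a, b, c, d] u v \<longleftrightarrow> a = u \<and> d = v \<and> distinct [a, b, c, d] \<and>
     {a, b, c, d} \<subseteq> verts G \<and> {a, b} \<in> edges G \<and> {b, c} \<in> edges G \<and> {c, d} \<in> edges G"
  by (auto simp: is_path_def less_Suc_eq numeral_3_eq_3)

lemma path_edges_four: "path_edges [a, b, c, d] = {{a, b}, {b, c}, {c, d}}"
proof -
  have "{g i | i. i < Suc (Suc (Suc 0))} = {g 0, g 1, g 2}" for g :: "nat \<Rightarrow> 'a set"
    by (auto simp: less_Suc_eq numeral_2_eq_2)
  from this[of "\<lambda>i. {[a, b, c, d] ! i, [a, b, c, d] ! Suc i}"] show ?thesis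
    by (simp add: path_edges_def numeral_2_eq_2)
qed

lemma path_interior_four: "path_interior [a, b, c, d] = {b, c}"
  by (simp add: path_interior_def)

definition graph_embedding :: "('a \<Rightarrow> 'b) \<Rightarrow> 'a graph \<Rightarrow> 'b graph \<Rightarrow> bool" where
  "graph_embedding f G H \<longleftrightarrow> inj_on f (verts G) \<and> f ` verts G \<subseteq> verts H \<and>
     (\<forall>x y. {x, y} \<in> edges G \<longrightarrow> {f x, f y} \<in> edges H)"

lemma is_path_map:
  assumes f: "graph_embedding f G H" and p: "is_path G p u v"
  shows "is_path H (map f p) (f u) (f v)"
proof -
  have "set p \<subseteq> verts G" using p by (simp add: is_path_def)
  then have "inj_on f (set p)" "f ` set p \<subseteq> verts H"
    using f unfolding graph_embedding_def by (blast intro: inj_on_subset)+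
  moreover have "{f (p ! i), f (p ! Suc i)} \<in> edges H" if "i < length p - 1" for i
    using f is_path_nth_edge[OF p that] by (simp add: graph_embedding_def)
  ultimately show ?thesis
    using p by (simp add: is_path_def hd_map last_map distinct_map)
qed

lemma path_interior_map_iff:
  assumes "inj_on f A" "set p \<subseteq> A" "x \<in> A"
  shows "f x \<in> path_interior (map f p) \<longleftrightarrow> x \<in> path_interior p"
proof -
  have "path_interior p \<subseteq> A" using path_interior_subset assms(2) by (rule order_trans)
  then show ?thesis unfolding path_interior_map by (rule inj_on_image_mem_iff[OF assms(1,3)])
qed

lemma path_edges_map_disjoint:
  assumes "inj_on f A" "set p \<subseteq> A" "set q \<subseteq> A" "path_edges p \<inter> path_edges q = {}"
  shows "path_edges (map f p) \<inter> path_edges (map f q) = {}"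
proof -
  have "path_edges p \<subseteq> Pow A" "path_edges q \<subseteq> Pow A"
    using assms(2,3) path_edges_subset by blast+
  then show ?thesis
    using assms(4) inj_on_image_Int[OF inj_on_image_Pow[OF assms(1)]]
    by (metis image_empty path_edges_map)
qed

lemma totally_odd_strong_immersion_map:
  assumes f: "graph_embedding f G H" and imm: "totally_odd_strong_immersion G k \<pi> P"
  shows "totally_odd_strong_immersion H k (f \<circ> \<pi>) (\<lambda>i j. map f (P i j))"
proof -
  have inj: "inj_on f (verts G)" and V: "f ` verts G \<subseteq> verts H"
    using f by (auto simp: graph_embedding_def)
  have terminals: "inj_on \<pi> {..<k}" "\<pi> ` {..<k} \<subseteq> verts G"
    using imm by (simp_all add: totally_odd_strong_immersion_def)
  have paths: "\<And>i j. i < j \<Longrightarrow> j < k \<Longrightarrow>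
        is_path G (P i j) (\<pi> i) (\<pi> j) \<and> odd (length (P i j) - 1) \<and> (\<forall>l<k. \<pi> l \<notin> path_interior (P i j))"
    using imm by (simp add: totally_odd_strong_immersion_def)
  have disjoint: "\<And>i j i' j'. i < j \<Longrightarrow> j < k \<Longrightarrow> i' < j' \<Longrightarrow> j' < k \<Longrightarrow> (i, j) \<noteq> (i', j') \<Longrightarrow>
        path_edges (P i j) \<inter> path_edges (P i' j') = {}"
    using imm by (simp add: totally_odd_strong_immersion_def)
  have path_verts: "set (P i j) \<subseteq> verts G" if "i < j" "j < k" for i j
    using paths[OF that] by (simp add: is_path_def)
  have "f (\<pi> l) \<notin> path_interior (map f (P i j))" if "i < j" "j < k" "l < k" for i j l
  proof -
    have "\<pi> l \<in> verts G" using terminals(2) that(3) by auto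
    then have "f (\<pi> l) \<in> path_interior (map f (P i j)) \<longleftrightarrow> \<pi> l \<in> path_interior (P i j)"
      by (rule path_interior_map_iff[OF inj path_verts[OF that(1,2)]])
    with paths[OF that(1,2)] that(3) show ?thesis by simp
  qed
  moreover have "path_edges (map f (P i j)) \<inter> path_edges (map f (P i' j')) = {}"
    if "i < j" "j < k" "i' < j'" "j' < k" "(i, j) \<noteq> (i', j')" for i j i' j'
    using path_edges_map_disjoint[OF inj path_verts[OF that(1,2)] path_verts[OF that(3,4)] disjoint[OF that]] .
  moreover have "inj_on (f \<circ> \<pi>) {..<k}"
    using comp_inj_on[OF terminals(1) inj_on_subset[OF inj terminals(2)]] .
  moreover have "(f \<circ> \<pi>) ` {..<k} \<subseteq> verts H"
    using terminals(2) V by auto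
  ultimately show ?thesis
    unfolding totally_odd_strong_immersion_def using paths is_path_map[OF f] by simp
qed

lemma has_toi_graph_embedding: "graph_embedding f G H \<Longrightarrow> has_toi G k \<Longrightarrow> has_toi H k"
  unfolding has_toi_def by (blast intro: totally_odd_strong_immersion_map)

lemma toi_eqI: "has_toi G k \<Longrightarrow> (\<And>k'. has_toi G k' \<Longrightarrow> k' \<le> k) \<Longrightarrow> toi G = k"
  unfolding toi_def by (rule Greatest_equality)

section \<open>Totally odd immersions and degrees\<close>

definition neighbours :: "'a graph \<Rightarrow> 'a \<Rightarrow> 'a set" where
  "neighbours G x = {y. {x, y} \<in> edges G}"

definition sym_path :: "(nat \<Rightarrow> nat \<Rightarrow> 'a list) \<Rightarrow> nat \<Rightarrow> nat \<Rightarrow> 'a list" where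
  "sym_path P i j = (if i < j then P i j else rev (P j i))"

lemma sym_path_swap: "i \<noteq> j \<Longrightarrow> sym_path P j i = rev (sym_path P i j)"
  by (auto simp: sym_path_def)

lemma path_edges_sym_path: "path_edges (sym_path P i j) = path_edges (P (min i j) (max i j))"
  by (cases "i < j") (simp_all add: sym_path_def path_edges_rev min_def max_def)

locale odd_immersion =
  fixes G :: "'a graph" and k :: nat and \<pi> :: "nat \<Rightarrow> 'a" and P :: "nat \<Rightarrow> nat \<Rightarrow> 'a list"
  assumes immersion: "totally_odd_strong_immersion G k \<pi> P"
begin

abbreviation terminals :: "'a set" where
  "terminals \<equiv> \<pi> ` {..<k}"

lemma inj_on_terminal: "inj_on \<pi> {..<k}"
  using immersion by (simp add: totally_odd_strong_immersion_def)

lemma terminal_in_verts: "i < k \<Longrightarrow> \<pi> i \<in> verts G"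
  using immersion by (auto simp: totally_odd_strong_immersion_def)

lemma terminals_subset_verts: "terminals \<subseteq> verts G"
  using terminal_in_verts by blast

lemma sym_path_valid:
  assumes "i < k" "j < k" "i \<noteq> j"
  shows "is_path G (sym_path P i j) (\<pi> i) (\<pi> j)"
    and "odd (length (sym_path P i j) - 1)"
    and "path_interior (sym_path P i j) \<inter> terminals = {}"
proof -
  have "is_path G (P a b) (\<pi> a) (\<pi> b) \<and> odd (length (P a b) - 1) \<and>
      (\<forall>l<k. \<pi> l \<notin> path_interior (P a b))" if "a < b" "b < k" for a b
    using immersion that by (simp add: totally_odd_strong_immersion_def)
  from this[of i j] this[of j i] assms
  show "is_path G (sym_path P i j) (\<pi> i) (\<pi> j)"
    and "odd (length (sym_path P i j) - 1)"
    and "path_interior (sym_path P i j) \<inter> terminals = {}"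
    by (auto simp: sym_path_def path_interior_rev intro: is_path_rev)
qed

lemma sym_path_edges_disjoint:
  assumes "i < k" "j < k" "i \<noteq> j" "i' < k" "j' < k" "i' \<noteq> j'" "{i, j} \<noteq> {i', j'}"
  shows "path_edges (sym_path P i j) \<inter> path_edges (sym_path P i' j') = {}"
proof -
  have "(min i j, max i j) \<noteq> (min i' j', max i' j')"
    using assms(7) by (auto simp: min_def max_def doubleton_eq_iff split: if_splits)
  moreover have "\<forall>a b a' b'. a < b \<and> b < k \<and> a' < b' \<and> b' < k \<and> (a, b) \<noteq> (a', b') \<longrightarrow>
      path_edges (P a b) \<inter> path_edges (P a' b') = {}"
    using immersion by (simp add: totally_odd_strong_immersion_def)
  ultimately show ?thesis
    using assms(1-6) unfolding path_edges_sym_path by (simp add: min_def max_def)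
qed

lemma length_sym_path:
  assumes "i < k" "j < k" "i \<noteq> j"
  shows "2 \<le> length (sym_path P i j)" and "even (length (sym_path P i j))"
proof -
  have "odd (n - 1) \<Longrightarrow> 2 \<le> n \<and> even n" for n :: nat
    by presburger
  then show "2 \<le> length (sym_path P i j)" "even (length (sym_path P i j))"
    using sym_path_valid(2)[OF assms] by blast+
qed

lemma sym_path_nth_edge:
  assumes "i < k" "j < k" "i \<noteq> j" "m < length (sym_path P i j) - 1"
  shows "{sym_path P i j ! m, sym_path P i j ! Suc m} \<in> edges G"
    and "{sym_path P i j ! m, sym_path P i j ! Suc m} \<in> path_edges (sym_path P i j)"
  using is_path_nth_edge[OF sym_path_valid(1)[OF assms(1-3)] assms(4)] nth_in_path_edges[OF assms(4)]
  by simp_all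

lemma sym_path_first: "i < k \<Longrightarrow> j < k \<Longrightarrow> i \<noteq> j \<Longrightarrow> sym_path P i j ! 0 = \<pi> i"
  using sym_path_valid(1) by (rule is_path_nth_0)

lemma sym_path_last:
  "i < k \<Longrightarrow> j < k \<Longrightarrow> i \<noteq> j \<Longrightarrow> sym_path P i j ! (length (sym_path P i j) - 1) = \<pi> j"
  using sym_path_valid(1) by (rule is_path_nth_last)

lemma distinct_sym_path: "i < k \<Longrightarrow> j < k \<Longrightarrow> i \<noteq> j \<Longrightarrow> distinct (sym_path P i j)"
  using sym_path_valid(1) by (simp add: is_path_def)

lemma set_sym_path: "i < k \<Longrightarrow> j < k \<Longrightarrow> i \<noteq> j \<Longrightarrow> set (sym_path P i j) \<subseteq> verts G"
  using sym_path_valid(1) by (simp add: is_path_def)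

lemma sym_path_inner_vertex:
  assumes "i < k" "j < k" "i \<noteq> j" "0 < m" "m < length (sym_path P i j) - 1"
  shows "sym_path P i j ! m \<notin> terminals"
proof -
  have "sym_path P i j ! m \<in> path_interior (sym_path P i j)"
    unfolding path_interior_iff_nth using assms(4,5) by blast
  then show ?thesis using sym_path_valid(3)[OF assms(1-3)] by blast
qed

lemma first_edge_sym_path:
  assumes "i < k" "j < k" "i \<noteq> j"
  shows "{\<pi> i, sym_path P i j ! 1} \<in> edges G"
    and "{\<pi> i, sym_path P i j ! 1} \<in> path_edges (sym_path P i j)"
  using sym_path_nth_edge[OF assms, of 0] length_sym_path(1)[OF assms] sym_path_first[OF assms]
  by simp_all

lemma inj_on_second_vertex:
  assumes "i < k"
  shows "inj_on (\<lambda>j. sym_path P i j ! 1) ({..<k} - {i})"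
proof (rule inj_onI, rule ccontr)
  fix j j'
  assume j: "j \<in> {..<k} - {i}" and j': "j' \<in> {..<k} - {i}"
    and same: "sym_path P i j ! 1 = sym_path P i j' ! 1" and "j \<noteq> j'"
  then have "path_edges (sym_path P i j) \<inter> path_edges (sym_path P i j') = {}"
    using assms by (intro sym_path_edges_disjoint) (auto simp: doubleton_eq_iff)
  moreover have "{\<pi> i, sym_path P i j ! 1} \<in> path_edges (sym_path P i j)"
    "{\<pi> i, sym_path P i j' ! 1} \<in> path_edges (sym_path P i j')"
    using first_edge_sym_path(2) assms j j' by auto
  ultimately show False using same by auto
qed

lemma second_vertex_in_neighbours:
  "i < k \<Longrightarrow> (\<lambda>j. sym_path P i j ! 1) ` ({..<k} - {i}) \<subseteq> neighbours G (\<pi> i)"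
  using first_edge_sym_path(1) by (auto simp: neighbours_def)

lemma card_neighbours_terminal_ge:
  assumes "i < k" "finite (neighbours G (\<pi> i))"
  shows "k - 1 \<le> card (neighbours G (\<pi> i))"
  using card_inj_on_le[OF inj_on_second_vertex second_vertex_in_neighbours assms(2)] assms(1)
  by simp

end

text \<open>The terminals have the least possible degree k - 1, so every edge at a terminal is the
  first edge of one of its paths.\<close>

locale saturated_immersion = odd_immersion +
  assumes finite_neighbours: "finite (neighbours G v)"
    and card_neighbours_terminal_le: "i < k \<Longrightarrow> card (neighbours G (\<pi> i)) \<le> k - 1"
begin

lemma second_vertex_image:
  assumes "i < k"
  shows "(\<lambda>j. sym_path P i j ! 1) ` ({..<k} - {i}) = neighbours G (\<pi> i)"
proof (rule card_subset_eq[OF finite_neighbours second_vertex_in_neighbours[OF assms]])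
  show "card ((\<lambda>j. sym_path P i j ! 1) ` ({..<k} - {i})) = card (neighbours G (\<pi> i))"
    using card_image[OF inj_on_second_vertex[OF assms]] assms
      card_neighbours_terminal_le[OF assms] card_neighbours_terminal_ge[OF assms finite_neighbours]
    by simp
qed

definition starts_via :: "'a \<Rightarrow> nat \<Rightarrow> nat \<Rightarrow> bool" where
  "starts_via w i j \<longleftrightarrow> i < k \<and> j < k \<and> i \<noteq> j \<and> sym_path P i j ! 1 = w \<and> 4 \<le> length (sym_path P i j)"

lemma starts_via_exists:
  assumes "w \<notin> terminals" "i < k" "\<pi> i \<in> neighbours G w"
  obtains j where "starts_via w i j"
proof -
  have "w \<in> neighbours G (\<pi> i)"
    using assms(3) by (simp add: neighbours_def insert_commute)
  then obtain j where j: "j < k" "i \<noteq> j" "sym_path P i j ! 1 = w"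
    using second_vertex_image[OF assms(2)] by (metis (no_types, lifting) DiffE imageE lessThan_iff singletonI)
  have "length (sym_path P i j) \<noteq> 2"
    using sym_path_last[OF assms(2) j(1)] j assms(1) by auto
  then have "4 \<le> length (sym_path P i j)"
    using length_sym_path[OF assms(2) j(1,2)] by (auto elim!: evenE)
  with j assms(2) show ?thesis by (intro that) (auto simp: starts_via_def)
qed

lemma sym_path_swap_second:
  assumes "i < k" "j < k" "i \<noteq> j"
  shows "sym_path P j i ! 1 = sym_path P i j ! (length (sym_path P i j) - 2)"
  using length_sym_path(1)[OF assms] by (simp add: sym_path_swap[OF assms(3)] rev_nth numeral_2_eq_2)

lemma sym_path_nth_eq_iff:
  assumes "i < k" "j < k" "i \<noteq> j" "m < length (sym_path P i j)" "m' < length (sym_path P i j)"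
  shows "sym_path P i j ! m = sym_path P i j ! m' \<longleftrightarrow> m = m'"
  using nth_eq_iff_index_eq[OF distinct_sym_path[OF assms(1-3)] assms(4,5)] .

lemma starts_via_second_edge:
  assumes "starts_via w i j"
  shows "{w, sym_path P i j ! 2} \<in> edges G" "{w, sym_path P i j ! 2} \<in> path_edges (sym_path P i j)"
    and "sym_path P i j ! 2 \<notin> terminals"
proof -
  have ij: "i < k" "j < k" "i \<noteq> j" and "sym_path P i j ! 1 = w"
    and "2 < length (sym_path P i j) - 1"
    using assms by (auto simp: starts_via_def)
  then show "{w, sym_path P i j ! 2} \<in> edges G" "{w, sym_path P i j ! 2} \<in> path_edges (sym_path P i j)"
    and "sym_path P i j ! 2 \<notin> terminals"
    using sym_path_nth_edge[OF ij, of 1] sym_path_inner_vertex[OF ij, of 2]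
    by (simp_all add: numeral_2_eq_2)
qed

lemma starts_via_third_vertex_inj:
  assumes "starts_via w i j" "starts_via w i' j'" "i \<noteq> i'"
  shows "sym_path P i j ! 2 \<noteq> sym_path P i' j' ! 2"
proof
  assume same: "sym_path P i j ! 2 = sym_path P i' j' ! 2"
  have ij: "i < k" "j < k" "i \<noteq> j" "i' < k" "j' < k" "i' \<noteq> j'"
    using assms(1,2) by (auto simp: starts_via_def)
  have "{w, sym_path P i j ! 2} \<in> path_edges (sym_path P i j) \<inter> path_edges (sym_path P i' j')"
    using starts_via_second_edge(2)[OF assms(1)] starts_via_second_edge(2)[OF assms(2)] same by simp
  then have "{i, j} = {i', j'}"
    using sym_path_edges_disjoint[OF ij] by (metis empty_iff)
  with assms(3) have "i' = j" "j' = i" by (auto simp: doubleton_eq_iff)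
  define p where "p = sym_path P i j"
  have L: "4 \<le> length p" and "p ! 1 = w"
    using assms(1) by (simp_all add: starts_via_def p_def)
  moreover have "p ! (length p - 2) = w"
    using assms(2) sym_path_swap_second[OF ij(1-3)] \<open>i' = j\<close> \<open>j' = i\<close>
    by (simp add: starts_via_def p_def)
  ultimately have "length p - 2 = 1"
    using sym_path_nth_eq_iff[OF ij(1-3), of "length p - 2" 1] by (simp add: p_def)
  with L show False by simp
qed

lemma card_terminal_neighbours:
  "card {i. i < k \<and> \<pi> i \<in> neighbours G w} = card (terminals \<inter> neighbours G w)"
proof -
  have "inj_on \<pi> {i. i < k \<and> \<pi> i \<in> neighbours G w}"
    using inj_on_terminal by (rule inj_on_subset) auto
  moreover have "\<pi> ` {i. i < k \<and> \<pi> i \<in> neighbours G w} = terminals \<inter> neighbours G w" by auto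
  ultimately show ?thesis using card_image by fastforce
qed

lemma third_vertex_map:
  assumes "w \<notin> terminals"
  obtains J where "\<And>i. i \<in> {i. i < k \<and> \<pi> i \<in> neighbours G w} \<Longrightarrow> starts_via w i (J i)"
    and "inj_on (\<lambda>i. sym_path P i (J i) ! 2) {i. i < k \<and> \<pi> i \<in> neighbours G w}"
    and "(\<lambda>i. sym_path P i (J i) ! 2) ` {i. i < k \<and> \<pi> i \<in> neighbours G w} \<subseteq> neighbours G w - terminals"
proof
  let ?I = "{i. i < k \<and> \<pi> i \<in> neighbours G w}"
  define J where "J i = (SOME j. starts_via w i j)" for i
  show J: "starts_via w i (J i)" if i: "i \<in> ?I" for i
  proof -
    obtain j where "starts_via w i j"
      using starts_via_exists[OF assms(1)] i by auto
    then show ?thesis unfolding J_def by (rule someI)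
  qed
  show "inj_on (\<lambda>i. sym_path P i (J i) ! 2) ?I"
  proof (rule inj_onI, rule ccontr)
    fix i i' assume "i \<in> ?I" "i' \<in> ?I" "sym_path P i (J i) ! 2 = sym_path P i' (J i') ! 2" "i \<noteq> i'"
    then show False using starts_via_third_vertex_inj[OF J J] by blast
  qed
  show "(\<lambda>i. sym_path P i (J i) ! 2) ` ?I \<subseteq> neighbours G w - terminals"
  proof (intro image_subsetI DiffI)
    fix i assume "i \<in> ?I"
    from starts_via_second_edge[OF J[OF this]]
    show "sym_path P i (J i) ! 2 \<in> neighbours G w" "sym_path P i (J i) ! 2 \<notin> terminals"
      by (simp_all add: neighbours_def)
  qed
qed

lemma card_terminal_neighbours_le:
  assumes "w \<notin> terminals"
  shows "card (terminals \<inter> neighbours G w) \<le> card (neighbours G w - terminals)"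
proof -
  obtain J where "\<And>i. i \<in> {i. i < k \<and> \<pi> i \<in> neighbours G w} \<Longrightarrow> starts_via w i (J i)"
    and "inj_on (\<lambda>i. sym_path P i (J i) ! 2) {i. i < k \<and> \<pi> i \<in> neighbours G w}"
    and "(\<lambda>i. sym_path P i (J i) ! 2) ` {i. i < k \<and> \<pi> i \<in> neighbours G w} \<subseteq> neighbours G w - terminals"
    by (rule third_vertex_map[OF assms]) (rule that)
  from card_inj_on_le[OF this(2,3) finite_Diff[OF finite_neighbours]] show ?thesis
    using card_terminal_neighbours[of w] by simp
qed

lemma card_neighbours_split:
  "card (neighbours G w) = card (terminals \<inter> neighbours G w) + card (neighbours G w - terminals)"
  using card_Int_Diff[OF finite_neighbours, of w terminals] by (simp add: Int_commute)

lemma card_terminal_neighbours_half: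
  "w \<notin> terminals \<Longrightarrow> 2 * card (terminals \<inter> neighbours G w) \<le> card (neighbours G w)"
  using card_terminal_neighbours_le[of w] card_neighbours_split[of w] by simp

lemma third_vertex_surj:
  assumes "w \<notin> terminals"
    and "card (neighbours G w - terminals) \<le> card (terminals \<inter> neighbours G w)"
    and "v \<in> neighbours G w - terminals"
  obtains i j where "starts_via w i j" "sym_path P i j ! 2 = v"
proof -
  let ?I = "{i. i < k \<and> \<pi> i \<in> neighbours G w}"
  obtain J where J: "\<And>i. i \<in> ?I \<Longrightarrow> starts_via w i (J i)"
    and inj: "inj_on (\<lambda>i. sym_path P i (J i) ! 2) ?I"
    and sub: "(\<lambda>i. sym_path P i (J i) ! 2) ` ?I \<subseteq> neighbours G w - terminals"
    by (rule third_vertex_map[OF assms(1)]) (rule that)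
  have "card (neighbours G w - terminals) \<le> card ?I"
    using assms(2) card_terminal_neighbours by simp
  also have "card ?I = card ((\<lambda>i. sym_path P i (J i) ! 2) ` ?I)"
    by (rule card_image[OF inj, symmetric])
  finally have "(\<lambda>i. sym_path P i (J i) ! 2) ` ?I = neighbours G w - terminals"
    by (rule card_seteq[OF finite_Diff[OF finite_neighbours] sub])
  with assms(3) have "v \<in> (\<lambda>i. sym_path P i (J i) ! 2) ` ?I" by simp
  then obtain i where i: "i \<in> ?I" and v: "v = sym_path P i (J i) ! 2" ..
  show ?thesis by (rule that[OF J[OF i]]) (simp add: v)
qed

text \<open>The non-terminal w = p ! 2 on a path p of length at least 5 has at least half of its
  neighbours among the terminals, so third_vertex_map is onto at w: the edge from p ! 1 to w is
  the second edge of a path leaving a terminal through w, which by edge-disjointness joins the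
  same two terminals as p.\<close>

lemma long_sym_path_second_vertex:
  assumes balanced: "\<And>w. w \<in> verts G \<Longrightarrow> w \<notin> terminals \<Longrightarrow>
      card (neighbours G w) \<le> 2 * card (terminals \<inter> neighbours G w)"
    and ij: "i < k" "j < k" "i \<noteq> j" and long: "6 \<le> length (sym_path P i j)"
  obtains i' j' where "{i', j'} = {i, j}" "sym_path P i' j' ! 1 = sym_path P i j ! 2"
proof -
  define p where "p = sym_path P i j"
  define w where "w = p ! 2"
  have w: "w \<in> verts G" "w \<notin> terminals"
    using set_sym_path[OF ij] sym_path_inner_vertex[OF ij, of 2] long
    by (auto simp: w_def p_def)
  have "{p ! 1, w} \<in> edges G" "{p ! 1, w} \<in> path_edges p"
    using sym_path_nth_edge[OF ij, of 1] long by (simp_all add: w_def p_def numeral_2_eq_2)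
  moreover have "p ! 1 \<notin> terminals"
    using sym_path_inner_vertex[OF ij, of 1] long by (simp add: p_def)
  ultimately have v: "p ! 1 \<in> neighbours G w - terminals"
    by (simp add: neighbours_def insert_commute)
  have "card (neighbours G w - terminals) \<le> card (terminals \<inter> neighbours G w)"
    using balanced[OF w] card_neighbours_split[of w] by simp
  from third_vertex_surj[OF w(2) this v]
  obtain i' j' where via: "starts_via w i' j'" "sym_path P i' j' ! 2 = p ! 1" .
  then have ij': "i' < k" "j' < k" "i' \<noteq> j'" and w': "sym_path P i' j' ! 1 = w"
    by (simp_all add: starts_via_def)
  have "{w, p ! 1} \<in> path_edges (sym_path P i' j') \<inter> path_edges p"
    using starts_via_second_edge(2)[OF via(1)] via(2) \<open>{p ! 1, w} \<in> path_edges p\<close>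
    by (simp add: insert_commute)
  then have "{i', j'} = {i, j}"
    using sym_path_edges_disjoint[OF ij' ij] by (metis empty_iff p_def)
  moreover have "sym_path P i' j' ! 1 = sym_path P i j ! 2"
    using w' by (simp add: w_def p_def)
  ultimately show ?thesis by (rule that)
qed

lemma length_sym_path_nonadjacent:
  assumes balanced: "\<And>w. w \<in> verts G \<Longrightarrow> w \<notin> terminals \<Longrightarrow>
      card (neighbours G w) \<le> 2 * card (terminals \<inter> neighbours G w)"
    and ij: "i < k" "j < k" "i \<noteq> j" and nonadjacent: "{\<pi> i, \<pi> j} \<notin> edges G"
  shows "length (sym_path P i j) = 4"
proof -
  define p where "p = sym_path P i j"
  have "length p \<noteq> 2"
  proof
    assume "length p = 2"
    then show False
      using sym_path_nth_edge(1)[OF ij, of 0] sym_path_first[OF ij] sym_path_last[OF ij] nonadjacent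
      by (simp add: p_def)
  qed
  moreover have "\<not> 6 \<le> length p"
  proof
    assume long: "6 \<le> length p"
    obtain i' j' where "{i', j'} = {i, j}" and second: "sym_path P i' j' ! 1 = p ! 2"
      using long_sym_path_second_vertex[OF balanced ij long[unfolded p_def]] unfolding p_def by blast
    then consider "i' = i" "j' = j" | "i' = j" "j' = i" by (auto simp: doubleton_eq_iff)
    then show False
    proof cases
      case 1
      then have "p ! 1 = p ! 2" using second by (simp add: p_def)
      then show False using sym_path_nth_eq_iff[OF ij, of 1 2] long by (simp add: p_def)
    next
      case 2
      then have "p ! (length p - 2) = p ! 2"
        using second sym_path_swap_second[OF ij] by (simp add: p_def)
      moreover have "length p - 2 < length p" "2 < length p" using long by simp_all
      ultimately have "length p - 2 = 2" using sym_path_nth_eq_iff[OF ij] by (simp add: p_def)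
      with long show False by simp
    qed
  qed
  moreover have "n = 4" if "even n" "2 \<le> n" "n \<noteq> 2" "\<not> 6 \<le> n" for n :: nat
    using that by presburger
  ultimately show ?thesis
    using length_sym_path[OF ij] by (simp add: p_def)
qed

end

section \<open>Rook graphs\<close>

abbreviation rook_graph :: "nat \<Rightarrow> nat \<Rightarrow> (nat \<times> nat) graph" where
  "rook_graph t s \<equiv> cart_prod (complete_graph t) (complete_graph s)"

definition rook_adj :: "nat \<times> nat \<Rightarrow> nat \<times> nat \<Rightarrow> bool" where
  "rook_adj u v \<longleftrightarrow> (fst u = fst v \<and> snd u \<noteq> snd v) \<or> (snd u = snd v \<and> fst u \<noteq> fst v)"

lemma verts_rook_graph: "verts (rook_graph t s) = {..<t} \<times> {..<s}"
  by (simp add: cart_prod_def verts_def complete_graph_def)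

lemma edge_rook_graph_iff:
  "{u, v} \<in> edges (rook_graph t s) \<longleftrightarrow> u \<in> {..<t} \<times> {..<s} \<and> v \<in> {..<t} \<times> {..<s} \<and> rook_adj u v"
proof
  assume "{u, v} \<in> edges (rook_graph t s)"
  then obtain g1 h1 g2 h2 where e: "{u, v} = {(g1, h1), (g2, h2)}"
    and "g1 < t" "g2 < t" "h1 < s" "h2 < s" "(g1 = g2 \<and> h1 \<noteq> h2) \<or> (h1 = h2 \<and> g1 \<noteq> g2)"
    by (auto simp: cart_prod_def edges_def verts_def complete_graph_def doubleton_eq_iff)
  moreover from e have "(u = (g1, h1) \<and> v = (g2, h2)) \<or> (u = (g2, h2) \<and> v = (g1, h1))"
    by (auto simp: doubleton_eq_iff)
  ultimately show "u \<in> {..<t} \<times> {..<s} \<and> v \<in> {..<t} \<times> {..<s} \<and> rook_adj u v"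
    by (auto simp: rook_adj_def)
next
  assume "u \<in> {..<t} \<times> {..<s} \<and> v \<in> {..<t} \<times> {..<s} \<and> rook_adj u v"
  then show "{u, v} \<in> edges (rook_graph t s)"
    by (cases u, cases v)
      (auto simp: cart_prod_def edges_def verts_def complete_graph_def rook_adj_def; blast)
qed

lemma neighbours_rook_graph:
  assumes "a < t" "b < s"
  shows "neighbours (rook_graph t s) (a, b) = {a} \<times> ({..<s} - {b}) \<union> ({..<t} - {a}) \<times> {b}"
  using assms by (auto simp: neighbours_def edge_rook_graph_iff rook_adj_def)

lemma finite_neighbours_rook_graph: "finite (neighbours (rook_graph t s) v)"
proof -
  have "neighbours (rook_graph t s) v \<subseteq> {..<t} \<times> {..<s}"
    by (auto simp: neighbours_def edge_rook_graph_iff)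
  then show ?thesis by (rule finite_subset) simp
qed

lemma card_neighbours_rook_graph:
  assumes "a < t" "b < s"
  shows "card (neighbours (rook_graph t s) (a, b)) = (t - 1) + (s - 1)"
proof -
  have "card ({a} \<times> ({..<s} - {b}) \<union> ({..<t} - {a}) \<times> {b}) =
      card ({a} \<times> ({..<s} - {b})) + card (({..<t} - {a}) \<times> {b})"
    by (rule card_Un_disjoint) auto
  then show ?thesis
    using assms by (simp add: neighbours_rook_graph card_cartesian_product)
qed

lemma has_toi_rook_graph_le:
  assumes "has_toi (rook_graph t s) k"
  shows "k \<le> t + s - 1"
proof (cases "k = 0")
  case False
  obtain \<pi> P where "totally_odd_strong_immersion (rook_graph t s) k \<pi> P"
    using assms by (auto simp: has_toi_def)
  then interpret odd_immersion "rook_graph t s" k \<pi> P by unfold_locales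
  obtain a b where ab: "\<pi> 0 = (a, b)" by force
  then have "a < t" "b < s"
    using terminal_in_verts[of 0] False by (auto simp: verts_rook_graph)
  then show ?thesis
    using card_neighbours_terminal_ge[of 0] False ab
    by (simp add: card_neighbours_rook_graph finite_neighbours_rook_graph)
qed simp

lemma has_toi_rook_graph_swap: "has_toi (rook_graph s t) k \<Longrightarrow> has_toi (rook_graph t s) k"
proof (erule has_toi_graph_embedding[rotated])
  have "{prod.swap u, prod.swap v} \<in> edges (rook_graph t s)" if "{u, v} \<in> edges (rook_graph s t)" for u v
    using that by (auto simp: edge_rook_graph_iff rook_adj_def)
  then show "graph_embedding prod.swap (rook_graph s t) (rook_graph t s)"
    by (auto simp: graph_embedding_def verts_rook_graph)
qed

section \<open>The construction for s \<ge> 4\<close>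

definition cyclic_succ :: "nat \<Rightarrow> nat \<Rightarrow> nat" where
  "cyclic_succ s b = (if b + 1 < s then b + 1 else 1)"

definition cyclic_pred :: "nat \<Rightarrow> nat \<Rightarrow> nat" where
  "cyclic_pred s c = (if c = 1 then s - 1 else c - 1)"

lemma cyclic_succ_in_range: "1 \<le> b \<Longrightarrow> b < s \<Longrightarrow> 1 \<le> cyclic_succ s b \<and> cyclic_succ s b < s"
  by (simp add: cyclic_succ_def)

lemma cyclic_pred_cyclic_succ: "1 \<le> b \<Longrightarrow> b < s \<Longrightarrow> cyclic_pred s (cyclic_succ s b) = b"
  by (auto simp: cyclic_succ_def cyclic_pred_def)

text \<open>For s = 3 the cyclic successor on the columns 1 and 2 is an involution and two paths
  in the same row would share an edge; this is where s \<ge> 4 is needed.\<close>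

lemma cyclic_succ_neq:
  assumes "4 \<le> s" "1 \<le> b" "b < s"
  shows "cyclic_succ s b \<noteq> b" "cyclic_succ s (cyclic_succ s b) \<noteq> b"
  using assms by (auto simp: cyclic_succ_def)

definition cross_terminal :: "nat \<Rightarrow> nat \<Rightarrow> nat \<times> nat" where
  "cross_terminal s i = (if i < s then (0, i) else (i + 1 - s, 0))"

definition cross_index :: "nat \<Rightarrow> nat \<times> nat \<Rightarrow> nat" where
  "cross_index s u = (if fst u = 0 then snd u else s + fst u - 1)"

definition cross_path :: "nat \<Rightarrow> nat \<Rightarrow> nat \<Rightarrow> (nat \<times> nat) list" where
  "cross_path s i j =
     (if 0 < i \<and> i < s \<and> s \<le> j
      then [(0, i), (j + 1 - s, i), (j + 1 - s, cyclic_succ s i), (j + 1 - s, 0)]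
      else [cross_terminal s i, cross_terminal s j])"

text \<open>The pair of terminals whose path in the construction uses the edge from u to v; on
  edges not used by the construction the value is meaningless.\<close>

definition cross_owner :: "nat \<Rightarrow> nat \<times> nat \<Rightarrow> nat \<times> nat \<Rightarrow> nat \<times> nat" where
  "cross_owner s u v =
     (if (fst u = 0 \<or> snd u = 0) \<and> (fst v = 0 \<or> snd v = 0)
      then (min (cross_index s u) (cross_index s v), max (cross_index s u) (cross_index s v))
      else if snd u = snd v then (snd u, s + max (fst u) (fst v) - 1)
      else if snd u = 0 then (cyclic_pred s (snd v), s + fst v - 1)
      else if snd v = 0 then (cyclic_pred s (snd u), s + fst u - 1)
      else if snd v = cyclic_succ s (snd u) then (snd u, s + fst u - 1)
      else (snd v, s + fst u - 1))"

lemma cross_index_terminal: "cross_index s (cross_terminal s i) = i"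
  by (simp add: cross_index_def cross_terminal_def)

lemma cross_path_valid:
  assumes "0 < t" "4 \<le> s" "i < j" "j < t + s - 1"
  shows "is_path (rook_graph t s) (cross_path s i j) (cross_terminal s i) (cross_terminal s j) \<and>
    odd (length (cross_path s i j) - 1) \<and>
    path_interior (cross_path s i j) \<inter> cross_terminal s ` {..<t + s - 1} = {}"
proof (cases "0 < i \<and> i < s \<and> s \<le> j")
  case True
  then show ?thesis
    using assms cyclic_succ_in_range[of i s] cyclic_succ_neq[of s i]
    by (auto simp: cross_path_def cross_terminal_def is_path_four path_interior_four
        verts_rook_graph edge_rook_graph_iff rook_adj_def)
next
  case False
  then show ?thesis
    using assms
    by (auto simp: cross_path_def cross_terminal_def is_path_pair path_interior_pair
        verts_rook_graph edge_rook_graph_iff rook_adj_def)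
qed

lemma cross_terminal_on_cross: "fst (cross_terminal s i) = 0 \<or> snd (cross_terminal s i) = 0"
  by (simp add: cross_terminal_def)

lemma cross_owner_path_edge:
  assumes "4 \<le> s" "i < j" "{u, v} \<in> path_edges (cross_path s i j)"
  shows "cross_owner s u v = (i, j)"
proof (cases "0 < i \<and> i < s \<and> s \<le> j")
  case True
  define a where "a = j + 1 - s"
  have a: "0 < a" "s + a - 1 = j" using True by (simp_all add: a_def)
  from assms(3) True
  have "{u, v} = {(0, i), (a, i)} \<or> {u, v} = {(a, i), (a, cyclic_succ s i)} \<or>
      {u, v} = {(a, cyclic_succ s i), (a, 0)}"
    by (simp add: cross_path_def path_edges_four a_def)
  then show ?thesis
    using a True cyclic_succ_in_range[of i s] cyclic_pred_cyclic_succ[of i s] cyclic_succ_neq[OF assms(1), of i]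
    by (auto simp: doubleton_eq_iff cross_owner_def)
next
  case False
  then have "{u, v} = {cross_terminal s i, cross_terminal s j}"
    using assms(3) by (simp add: cross_path_def if_not_P[OF False] path_edges_pair)
  then show ?thesis
    using assms(2) cross_terminal_on_cross[of s i] cross_terminal_on_cross[of s j]
    by (auto simp: doubleton_eq_iff cross_owner_def cross_index_terminal)
qed

lemma cross_immersion:
  assumes "0 < t" "4 \<le> s"
  shows "totally_odd_strong_immersion (rook_graph t s) (t + s - 1) (cross_terminal s) (cross_path s)"
  unfolding totally_odd_strong_immersion_def
proof (intro conjI allI impI)
  show "inj_on (cross_terminal s) {..<t + s - 1}"
    by (rule inj_on_inverseI[of _ "cross_index s"]) (rule cross_index_terminal)
  show "cross_terminal s ` {..<t + s - 1} \<subseteq> verts (rook_graph t s)"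
    using assms by (auto simp: cross_terminal_def verts_rook_graph)
next
  fix i j assume "i < j \<and> j < t + s - 1"
  note path = cross_path_valid[OF assms, of i j]
  with \<open>i < j \<and> j < t + s - 1\<close>
  show "is_path (rook_graph t s) (cross_path s i j) (cross_terminal s i) (cross_terminal s j)"
    and "odd (length (cross_path s i j) - 1)"
    by simp_all
  fix l assume "l < t + s - 1"
  with path \<open>i < j \<and> j < t + s - 1\<close>
  show "cross_terminal s l \<notin> path_interior (cross_path s i j)" by blast
next
  fix i j i' j'
  assume ij: "i < j \<and> j < t + s - 1 \<and> i' < j' \<and> j' < t + s - 1 \<and> (i, j) \<noteq> (i', j')"
  show "path_edges (cross_path s i j) \<inter> path_edges (cross_path s i' j') = {}"
  proof (rule ccontr)
    assume "path_edges (cross_path s i j) \<inter> path_edges (cross_path s i' j') \<noteq> {}"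
    then obtain e where e: "e \<in> path_edges (cross_path s i j)" "e \<in> path_edges (cross_path s i' j')"
      by blast
    then obtain u v where "e = {u, v}" unfolding path_edges_def by blast
    then have "cross_owner s u v = (i, j)" "cross_owner s u v = (i', j')"
      using cross_owner_path_edge[OF assms(2)] e ij by blast+
    then show False using ij by simp
  qed
qed

lemma has_toi_rook_graph: "0 < t \<Longrightarrow> 4 \<le> s \<Longrightarrow> has_toi (rook_graph t s) (t + s - 1)"
  unfolding has_toi_def using cross_immersion by blast

lemma has_toi_rook_graph_large:
  assumes "2 \<le> t" "2 \<le> s" "4 \<le> max s t"
  shows "has_toi (rook_graph t s) (t + s - 1)"
proof (cases "4 \<le> s")
  case True
  then show ?thesis using has_toi_rook_graph[of t s] assms(1) by simp
next
  case False
  with assms have "has_toi (rook_graph s t) (s + t - 1)"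
    using has_toi_rook_graph[of s t] by (simp add: max_def split: if_splits)
  then show ?thesis by (simp add: has_toi_rook_graph_swap add.commute)
qed

lemma has_toi_rook_graph_row:
  assumes "0 < t"
  shows "has_toi (rook_graph t s) s"
proof -
  have "totally_odd_strong_immersion (rook_graph t s) s (Pair 0) (\<lambda>i j. [(0, i), (0, j)])"
    unfolding totally_odd_strong_immersion_def
  proof (intro conjI allI impI)
    show "inj_on (Pair 0) {..<s}" by (rule inj_onI) simp
    show "Pair 0 ` {..<s} \<subseteq> verts (rook_graph t s)" using assms by (auto simp: verts_rook_graph)
    fix i j :: nat assume "i < j \<and> j < s"
    then show "is_path (rook_graph t s) [(0, i), (0, j)] (0, i) (0, j)"
      using assms by (simp add: is_path_pair verts_rook_graph edge_rook_graph_iff rook_adj_def)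
    show "odd (length [(0::nat, i), (0, j)] - 1)" by simp
    fix l show "(0, l) \<notin> path_interior [(0::nat, i), (0, j)]" by (simp add: path_interior_pair)
  next
    fix i j i' j' :: nat assume "i < j \<and> j < s \<and> i' < j' \<and> j' < s \<and> (i, j) \<noteq> (i', j')"
    then show "path_edges [(0::nat, i), (0, j)] \<inter> path_edges [(0, i'), (0, j')] = {}"
      by (auto simp: path_edges_pair doubleton_eq_iff)
  qed
  then show ?thesis unfolding has_toi_def by blast
qed

lemma has_toi_rook_graph_3_3: "has_toi (rook_graph 3 3) 4"
proof -
  define \<pi> where "\<pi> i = [(0::nat, 0::nat), (0, 1), (0, 2), (1, 0)] ! i" for i :: nat
  define P where "P i j =
    (if (i, j) = (1, 3) then [(0, 1), (2, 1), (2, 0), (1, 0)]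
     else if (i, j) = (2, 3) then [(0, 2), (1, 2), (1, 1), (1, 0)]
     else [\<pi> i, \<pi> j])" for i j :: nat
  have lt4: "i < 4 \<longleftrightarrow> i = 0 \<or> i = 1 \<or> i = 2 \<or> i = 3" for i :: nat
    by arith
  have pairs: "i < j \<and> j < 4 \<longleftrightarrow> (i, j) \<in> {(0, 1), (0, 2), (0, 3), (1, 2), (1, 3), (2, 3)}" for i j :: nat
    by (auto simp: lt4)
  have "totally_odd_strong_immersion (rook_graph 3 3) 4 \<pi> P"
    unfolding totally_odd_strong_immersion_def
  proof (intro conjI allI impI)
    show "inj_on \<pi> {..<4}" unfolding inj_on_def by (auto simp: \<pi>_def lt4)
    show "\<pi> ` {..<4} \<subseteq> verts (rook_graph 3 3)" by (auto simp: \<pi>_def verts_rook_graph lt4)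
    fix i j :: nat assume "i < j \<and> j < 4"
    then have ij: "(i, j) \<in> {(0, 1), (0, 2), (0, 3), (1, 2), (1, 3), (2, 3)}" using pairs by blast
    then show "is_path (rook_graph 3 3) (P i j) (\<pi> i) (\<pi> j)" "odd (length (P i j) - 1)"
      by (auto simp: P_def \<pi>_def is_path_pair is_path_four verts_rook_graph edge_rook_graph_iff rook_adj_def)
    fix l :: nat assume "l < 4"
    then show "\<pi> l \<notin> path_interior (P i j)"
      using ij by (auto simp: P_def \<pi>_def path_interior_pair path_interior_four lt4)
  next
    fix i j i' j' :: nat assume "i < j \<and> j < 4 \<and> i' < j' \<and> j' < 4 \<and> (i, j) \<noteq> (i', j')"
    moreover from this have "(i, j) \<in> {(0, 1), (0, 2), (0, 3), (1, 2), (1, 3), (2, 3)}"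
      "(i', j') \<in> {(0, 1), (0, 2), (0, 3), (1, 2), (1, 3), (2, 3)}"
      using pairs by blast+
    ultimately show "path_edges (P i j) \<inter> path_edges (P i' j') = {}"
      by (elim conjE insertE emptyE; simp add: P_def \<pi>_def path_edges_pair path_edges_four doubleton_eq_iff)
  qed
  then show ?thesis unfolding has_toi_def by blast
qed

section \<open>The exceptional cases\<close>

lemma saturated_immersion_rook_graph:
  assumes "totally_odd_strong_immersion (rook_graph t s) k \<pi> P" "k = t + s - 1"
  shows "saturated_immersion (rook_graph t s) k \<pi> P"
proof -
  interpret odd_immersion "rook_graph t s" k \<pi> P by (rule odd_immersion.intro[OF assms(1)])
  show ?thesis
  proof unfold_locales
    show "finite (neighbours (rook_graph t s) v)" for v by (rule finite_neighbours_rook_graph)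
    fix i assume "i < k"
    then obtain a b where "\<pi> i = (a, b)" "a < t" "b < s"
      using terminal_in_verts by (force simp: verts_rook_graph)
    then show "card (neighbours (rook_graph t s) (\<pi> i)) \<le> k - 1"
      using assms(2) by (simp add: card_neighbours_rook_graph)
  qed
qed

lemma not_has_toi_rook_graph_2_3: "\<not> has_toi (rook_graph 2 3) 4"
proof
  assume "has_toi (rook_graph 2 3) 4"
  then obtain \<pi> P where "totally_odd_strong_immersion (rook_graph 2 3) 4 \<pi> P"
    by (auto simp: has_toi_def)
  then interpret saturated_immersion "rook_graph 2 3" 4 \<pi> P
    by (rule saturated_immersion_rook_graph) simp
  define V where "V = verts (rook_graph 2 3)"
  have V: "finite V" "card V = 6" "terminals \<subseteq> V"
    using terminals_subset_verts by (simp_all add: V_def verts_rook_graph card_cartesian_product)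
  have "card (V - terminals) = 2"
    using card_Diff_subset[OF finite_subset[OF V(3,1)] V(3)] card_image[OF inj_on_terminal] V(2)
    by simp
  then obtain w where w: "w \<in> V" "w \<notin> terminals"
    by (metis Diff_iff card_0_eq ex_in_conv finite_Diff V(1) zero_neq_numeral)
  then obtain a b where ab: "w = (a, b)" "a < 2" "b < 3" by (auto simp: V_def verts_rook_graph)
  have "neighbours (rook_graph 2 3) w - terminals \<subseteq> (V - terminals) - {w}"
    using ab by (auto simp: V_def verts_rook_graph neighbours_rook_graph)
  from card_mono[OF _ this] have "card (neighbours (rook_graph 2 3) w - terminals) \<le> 1"
    using \<open>card (V - terminals) = 2\<close> w V(1) by simp
  moreover have "card (neighbours (rook_graph 2 3) w) = 3"
    using ab by (simp add: card_neighbours_rook_graph)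
  ultimately show False
    using card_terminal_neighbours_half[OF w(2)] card_neighbours_split[of w] by simp
qed

lemma card_Int_set_distinct:
  "distinct xs \<Longrightarrow> card (T \<inter> set xs) = (\<Sum>x\<leftarrow>xs. of_bool (x \<in> T))"
  by (induction xs) (auto simp: Int_insert_right card_insert_if)

definition grid3 :: "(nat \<times> nat) list" where
  "grid3 = [(0, 0), (0, 1), (0, 2), (1, 0), (1, 1), (1, 2), (2, 0), (2, 1), (2, 2)]"

lemma set_grid3: "set grid3 = {..<3} \<times> {..<3}"
proof -
  have "{..<3::nat} = {0, 1, 2}"
    by (simp add: numeral_3_eq_3 numeral_2_eq_2 lessThan_Suc insert_commute)
  then show ?thesis by (auto simp: grid3_def)
qed

lemma grid3_cross_cases:
  assumes "(\<Sum>c\<leftarrow>grid3. of_bool (c \<in> T)) = (5::nat)"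
    and "\<forall>w\<in>set grid3. w \<notin> T \<longrightarrow> (\<Sum>c\<leftarrow>filter (\<lambda>c. rook_adj w c) grid3. of_bool (c \<in> T)) \<le> (2::nat)"
  shows "\<exists>a0\<in>{0, 1, 2}. \<exists>b0\<in>{0, 1, 2}. \<forall>c\<in>set grid3. fst c = a0 \<or> snd c = b0 \<longrightarrow> c \<in> T"
  using assms unfolding grid3_def rook_adj_def
  apply simp
  apply (cases "(0::nat, 0::nat) \<in> T"; simp; cases "(0::nat, 1::nat) \<in> T"; simp;
      cases "(0::nat, 2::nat) \<in> T"; simp; cases "(1::nat, 0::nat) \<in> T"; simp;
      cases "(1::nat, 1::nat) \<in> T"; simp; cases "(1::nat, 2::nat) \<in> T"; simp;
      cases "(2::nat, 0::nat) \<in> T"; simp; cases "(2::nat, 1::nat) \<in> T"; simp;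
      cases "(2::nat, 2::nat) \<in> T"; simp)
  done

lemma rook_3_3_cross:
  fixes T :: "(nat \<times> nat) set"
  assumes T: "T \<subseteq> {..<3} \<times> {..<3}" "card T = 5"
    and sparse: "\<And>w. w \<in> {..<3} \<times> {..<3} - T \<Longrightarrow> card (T \<inter> neighbours (rook_graph 3 3) w) \<le> 2"
  shows "\<exists>a0<3. \<exists>b0<3. T = {c \<in> {..<3} \<times> {..<3}. fst c = a0 \<or> snd c = b0}"
proof -
  have dist: "distinct grid3" by (simp add: grid3_def)
  have "T \<inter> set grid3 = T" using T(1) by (auto simp: set_grid3)
  then have "(\<Sum>c\<leftarrow>grid3. of_bool (c \<in> T)) = (5::nat)"
    using T(2) card_Int_set_distinct[OF dist, of T] by simp
  moreover have "\<forall>w\<in>set grid3. w \<notin> T \<longrightarrow> (\<Sum>c\<leftarrow>filter (\<lambda>c. rook_adj w c) grid3. of_bool (c \<in> T)) \<le> (2::nat)"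
  proof (intro ballI impI)
    fix w assume "w \<in> set grid3" "w \<notin> T"
    moreover have "neighbours (rook_graph 3 3) w = set (filter (\<lambda>c. rook_adj w c) grid3)"
      using \<open>w \<in> set grid3\<close> by (auto simp: neighbours_def edge_rook_graph_iff set_grid3)
    ultimately show "(\<Sum>c\<leftarrow>filter (\<lambda>c. rook_adj w c) grid3. of_bool (c \<in> T)) \<le> (2::nat)"
      using sparse[of w] card_Int_set_distinct[of "filter (\<lambda>c. rook_adj w c) grid3" T] dist set_grid3
      by simp
  qed
  ultimately have "\<exists>a0\<in>{0, 1, 2}. \<exists>b0\<in>{0, 1, 2}. \<forall>c\<in>set grid3. fst c = a0 \<or> snd c = b0 \<longrightarrow> c \<in> T"
    by (rule grid3_cross_cases)
  then obtain a0 b0 where ab: "a0 \<in> {0, 1, 2}" "b0 \<in> {0, 1, 2}"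
    and sub: "set (filter (\<lambda>c. fst c = a0 \<or> snd c = b0) grid3) \<subseteq> T"
    by auto
  moreover have "card (set (filter (\<lambda>c. fst c = a0 \<or> snd c = b0) grid3)) = 5"
    using ab by (auto simp: grid3_def)
  ultimately have "set (filter (\<lambda>c. fst c = a0 \<or> snd c = b0) grid3) = T"
    using card_subset_eq[OF finite_subset[OF T(1)]] T(2) by simp
  moreover have "set (filter (\<lambda>c. fst c = a0 \<or> snd c = b0) grid3) =
      {c \<in> {..<3} \<times> {..<3}. fst c = a0 \<or> snd c = b0}"
    by (simp only: set_grid3 set_filter)
  moreover have "a0 < 3" "b0 < 3" using ab by auto
  ultimately show ?thesis by (metis (no_types, lifting))
qed

text \<open>Four paths from (a0, b) to (a, b0), for a \<in> {a1, a2} and b \<in> {b1, b2}, each turning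
  either at (a, b) or at (a', b), where a' is the other row. Two of them with a common end turn
  alike, since otherwise they share their first or last edge; so all four turn alike, and then
  two of them share their middle edge.\<close>

lemma block_paths_collide:
  fixes X Y :: "'a \<Rightarrow> 'b \<Rightarrow> 'a \<times> 'b"
  assumes "a1 \<noteq> a2" "b1 \<noteq> b2"
    and shape: "\<And>a a' b b'. {a, a'} = {a1, a2} \<Longrightarrow> {b, b'} = {b1, b2} \<Longrightarrow>
      (X a b = (a, b) \<and> Y a b = (a, b')) \<or> (X a b = (a', b) \<and> Y a b = (a, b))"
    and disjoint: "\<And>a b a' b'. a \<in> {a1, a2} \<Longrightarrow> b \<in> {b1, b2} \<Longrightarrow> a' \<in> {a1, a2} \<Longrightarrow> b' \<in> {b1, b2} \<Longrightarrow>
      (a, b) \<noteq> (a', b') \<Longrightarrow>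
      {{(a0, b), X a b}, {X a b, Y a b}, {Y a b, (a, b0)}} \<inter>
      {{(a0, b'), X a' b'}, {X a' b', Y a' b'}, {Y a' b', (a', b0)}} = {}"
  shows False
proof -
  have s11: "(X a1 b1 = (a1, b1) \<and> Y a1 b1 = (a1, b2)) \<or> (X a1 b1 = (a2, b1) \<and> Y a1 b1 = (a1, b1))"
    and s12: "(X a1 b2 = (a1, b2) \<and> Y a1 b2 = (a1, b1)) \<or> (X a1 b2 = (a2, b2) \<and> Y a1 b2 = (a1, b2))"
    and s21: "(X a2 b1 = (a2, b1) \<and> Y a2 b1 = (a2, b2)) \<or> (X a2 b1 = (a1, b1) \<and> Y a2 b1 = (a2, b1))"
    by (rule shape; blast)+
  have "{{(a0, b1), X a1 b1}, {X a1 b1, Y a1 b1}, {Y a1 b1, (a1, b0)}} \<inter>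
      {{(a0, b1), X a2 b1}, {X a2 b1, Y a2 b1}, {Y a2 b1, (a2, b0)}} = {}"
    using assms(1) by (intro disjoint) auto
  then have col: "X a1 b1 \<noteq> X a2 b1" "{X a1 b1, Y a1 b1} \<noteq> {X a2 b1, Y a2 b1}"
    by (metis IntI empty_iff insertI1 insertI2)+
  have "{{(a0, b1), X a1 b1}, {X a1 b1, Y a1 b1}, {Y a1 b1, (a1, b0)}} \<inter>
      {{(a0, b2), X a1 b2}, {X a1 b2, Y a1 b2}, {Y a1 b2, (a1, b0)}} = {}"
    using assms(2) by (intro disjoint) auto
  then have row: "Y a1 b1 \<noteq> Y a1 b2" "{X a1 b1, Y a1 b1} \<noteq> {X a1 b2, Y a1 b2}"
    by (metis IntI empty_iff insertI1 insertI2)+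
  show False
  proof (cases "X a1 b1 = (a1, b1)")
    case True
    with s11 s12 row(1) assms(1,2) have "Y a1 b1 = (a1, b2)" "X a1 b2 = (a1, b2)" "Y a1 b2 = (a1, b1)"
      by auto
    with True row(2) show False by (simp add: insert_commute)
  next
    case False
    with s11 s21 col(1) assms(1,2) have "X a1 b1 = (a2, b1)" "Y a1 b1 = (a1, b1)"
      "X a2 b1 = (a1, b1)" "Y a2 b1 = (a2, b1)"
      by auto
    with col(2) show False by (simp add: insert_commute)
  qed
qed

lemma lessThan_3_remove:
  assumes "(a0::nat) < 3"
  obtains a1 a2 where "a1 \<noteq> a2" "\<And>a. a < 3 \<and> a \<noteq> a0 \<longleftrightarrow> a = a1 \<or> a = a2"
proof -
  consider "a0 = 0" | "a0 = 1" | "a0 = 2" using assms by linarith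
  then show ?thesis
  proof cases
    case 1 show ?thesis by (rule that[of 1 2]) (auto simp: 1)
  next
    case 2 show ?thesis by (rule that[of 0 2]) (auto simp: 2)
  next
    case 3 show ?thesis by (rule that[of 0 1]) (auto simp: 3)
  qed
qed

lemma rook_3_3_detour_shape:
  assumes "is_path (rook_graph 3 3) [(a0, b), x, y, (a, b0)] (a0, b) (a, b0)"
    and "fst x \<noteq> a0" "snd x \<noteq> b0" "fst y \<noteq> a0" "snd y \<noteq> b0"
    and "a \<noteq> a'" "\<And>z. z < 3 \<Longrightarrow> z \<noteq> a0 \<Longrightarrow> z = a \<or> z = a'"
    and "b \<noteq> b'" "\<And>z. z < 3 \<Longrightarrow> z \<noteq> b0 \<Longrightarrow> z = b \<or> z = b'"
  shows "(x = (a, b) \<and> y = (a, b')) \<or> (x = (a', b) \<and> y = (a, b))"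
proof -
  obtain x1 x2 y1 y2 where xy: "x = (x1, x2)" "y = (y1, y2)" by force
  have "x1 < 3" "x2 = b" "y1 = a" "y2 < 3" "rook_adj x y"
    using assms(1-5) by (auto simp: xy is_path_four edge_rook_graph_iff rook_adj_def)
  then show ?thesis
    using assms(7)[of x1] assms(9)[of y2] assms(2,5,6,8) by (auto simp: xy rook_adj_def)
qed

locale cross_immersion_3_3 = saturated_immersion "rook_graph 3 3" 5 \<pi> P
  for \<pi> :: "nat \<Rightarrow> nat \<times> nat" and P +
  fixes a0 b0 :: nat
  assumes centre: "a0 < 3" "b0 < 3"
    and cross: "terminals = {c \<in> {..<3} \<times> {..<3}. fst c = a0 \<or> snd c = b0}"
begin

lemma balanced:
  assumes "w \<in> verts (rook_graph 3 3)" "w \<notin> terminals"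
  shows "card (neighbours (rook_graph 3 3) w) \<le> 2 * card (terminals \<inter> neighbours (rook_graph 3 3) w)"
proof -
  obtain x y where w: "w = (x, y)" "x < 3" "y < 3"
    using assms(1) by (auto simp: verts_rook_graph)
  with assms(2) cross have "x \<noteq> a0" "y \<noteq> b0" by auto
  have "terminals \<inter> neighbours (rook_graph 3 3) w =
      {c \<in> {..<3} \<times> {..<3}. fst c = a0 \<or> snd c = b0} \<inter> ({x} \<times> ({..<3} - {y}) \<union> ({..<3} - {x}) \<times> {y})"
    by (simp only: cross w(1) neighbours_rook_graph[OF w(2,3)])
  also have "\<dots> = {(a0, y), (x, b0)}"
    using w(2,3) centre \<open>x \<noteq> a0\<close> \<open>y \<noteq> b0\<close> by auto
  finally show ?thesis
    using w \<open>x \<noteq> a0\<close> by (simp add: card_neighbours_rook_graph)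
qed

definition idx :: "nat \<times> nat \<Rightarrow> nat" where
  "idx c = the_inv_into {..<5} \<pi> c"

lemma idx: "c \<in> terminals \<Longrightarrow> idx c < 5 \<and> \<pi> (idx c) = c"
  using the_inv_into_f_eq[OF inj_on_terminal] the_inv_into_into[OF inj_on_terminal]
  by (auto simp: idx_def)

definition detour :: "nat \<Rightarrow> nat \<Rightarrow> (nat \<times> nat) list" where
  "detour a b = sym_path P (idx (a0, b)) (idx (a, b0))"

lemma detour_ends:
  assumes "a < 3" "b < 3" "a \<noteq> a0" "b \<noteq> b0"
  shows "idx (a0, b) < 5" "idx (a, b0) < 5" "idx (a0, b) \<noteq> idx (a, b0)"
    and "\<pi> (idx (a0, b)) = (a0, b)" "\<pi> (idx (a, b0)) = (a, b0)"
proof -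
  have "(a0, b) \<in> terminals" "(a, b0) \<in> terminals" using cross assms centre by auto
  with idx assms(3) show "idx (a0, b) < 5" "idx (a, b0) < 5" "idx (a0, b) \<noteq> idx (a, b0)"
    and "\<pi> (idx (a0, b)) = (a0, b)" "\<pi> (idx (a, b0)) = (a, b0)"
    by (metis prod.inject)+
qed

lemma detour_shape:
  assumes "a < 3" "b < 3" "a \<noteq> a0" "b \<noteq> b0"
  obtains x y where "detour a b = [(a0, b), x, y, (a, b0)]"
    and "is_path (rook_graph 3 3) [(a0, b), x, y, (a, b0)] (a0, b) (a, b0)"
    and "fst x \<noteq> a0" "snd x \<noteq> b0" "fst y \<noteq> a0" "snd y \<noteq> b0"
proof -
  note ij = detour_ends(1-3)[OF assms] and \<pi>ij = detour_ends(4,5)[OF assms]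
  have "{\<pi> (idx (a0, b)), \<pi> (idx (a, b0))} \<notin> edges (rook_graph 3 3)"
    using assms(3,4) by (simp add: \<pi>ij edge_rook_graph_iff rook_adj_def)
  from length_sym_path_nonadjacent[OF balanced ij this]
  have len: "length (detour a b) = 4" by (simp add: detour_def)
  obtain x y where p: "detour a b = [(a0, b), x, y, (a, b0)]"
  proof
    show "detour a b = [(a0, b), detour a b ! 1, detour a b ! 2, (a, b0)]"
      using sym_path_first[OF ij] sym_path_last[OF ij] len
      by (intro nth_equalityI) (auto simp: detour_def \<pi>ij less_Suc_eq numeral_eq_Suc)
  qed
  have "x \<notin> terminals" "y \<notin> terminals"
    using sym_path_inner_vertex[OF ij, of 1] sym_path_inner_vertex[OF ij, of 2] len
    unfolding detour_def[symmetric] by (simp_all add: p)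
  moreover have "x \<in> {..<3} \<times> {..<3}" "y \<in> {..<3} \<times> {..<3}"
    using set_sym_path[OF ij] unfolding detour_def[symmetric] by (auto simp: p verts_rook_graph)
  moreover have "is_path (rook_graph 3 3) [(a0, b), x, y, (a, b0)] (a0, b) (a, b0)"
    using sym_path_valid(1)[OF ij] unfolding detour_def[symmetric] by (simp add: p \<pi>ij)
  ultimately show ?thesis
    using that[OF p] cross by auto
qed

lemma detours_disjoint:
  assumes "a < 3" "b < 3" "a \<noteq> a0" "b \<noteq> b0" "a' < 3" "b' < 3" "a' \<noteq> a0" "b' \<noteq> b0"
    and "(a, b) \<noteq> (a', b')"
  shows "path_edges (detour a b) \<inter> path_edges (detour a' b') = {}"
proof -
  note ends = detour_ends[OF assms(1-4)] detour_ends[OF assms(5-8)]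
  have "{idx (a0, b), idx (a, b0)} \<noteq> {idx (a0, b'), idx (a', b0)}"
  proof
    assume "{idx (a0, b), idx (a, b0)} = {idx (a0, b'), idx (a', b0)}"
    then have "\<pi> ` {idx (a0, b), idx (a, b0)} = \<pi> ` {idx (a0, b'), idx (a', b0)}" by simp
    then have "{(a0, b), (a, b0)} = {(a0, b'), (a', b0)}" using ends by simp
    then show False using assms(3,9) by (auto simp: doubleton_eq_iff)
  qed
  then show ?thesis
    unfolding detour_def using ends by (intro sym_path_edges_disjoint) auto
qed

lemma impossible: False
proof -
  define X where "X a b = detour a b ! 1" for a b
  define Y where "Y a b = detour a b ! 2" for a b
  have XY: "detour a b = [(a0, b), X a b, Y a b, (a, b0)] \<and>
      is_path (rook_graph 3 3) [(a0, b), X a b, Y a b, (a, b0)] (a0, b) (a, b0) \<and>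
      fst (X a b) \<noteq> a0 \<and> snd (X a b) \<noteq> b0 \<and> fst (Y a b) \<noteq> a0 \<and> snd (Y a b) \<noteq> b0"
    if "a < 3" "b < 3" "a \<noteq> a0" "b \<noteq> b0" for a b
    by (rule detour_shape[OF that]) (simp add: X_def Y_def)
  obtain a1 a2 where a12: "a1 \<noteq> a2" "\<And>a. a < 3 \<and> a \<noteq> a0 \<longleftrightarrow> a = a1 \<or> a = a2"
    by (rule lessThan_3_remove[OF centre(1)]) (rule that)
  obtain b1 b2 where b12: "b1 \<noteq> b2" "\<And>b. b < 3 \<and> b \<noteq> b0 \<longleftrightarrow> b = b1 \<or> b = b2"
    by (rule lessThan_3_remove[OF centre(2)]) (rule that)
  show False
  proof (rule block_paths_collide[of a1 a2 b1 b2 X Y a0 b0])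
    show "a1 \<noteq> a2" by (rule a12(1))
    show "b1 \<noteq> b2" by (rule b12(1))
  next
    fix a a' b b' assume "{a, a'} = {a1, a2}" "{b, b'} = {b1, b2}"
    then have a: "a < 3" "a \<noteq> a0" "a \<noteq> a'" "\<And>z. z < 3 \<Longrightarrow> z \<noteq> a0 \<Longrightarrow> z = a \<or> z = a'"
      and b: "b < 3" "b \<noteq> b0" "b \<noteq> b'" "\<And>z. z < 3 \<Longrightarrow> z \<noteq> b0 \<Longrightarrow> z = b \<or> z = b'"
      using a12 b12 by (auto simp: doubleton_eq_iff)
    show "X a b = (a, b) \<and> Y a b = (a, b') \<or> X a b = (a', b) \<and> Y a b = (a, b)"
      using XY[OF a(1) b(1) a(2) b(2)] by (intro rook_3_3_detour_shape a(3,4) b(3,4)) auto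
  next
    fix a b a' b'
    assume "a \<in> {a1, a2}" "b \<in> {b1, b2}" "a' \<in> {a1, a2}" "b' \<in> {b1, b2}" and "(a, b) \<noteq> (a', b')"
    moreover from this have ab: "a < 3" "b < 3" "a \<noteq> a0" "b \<noteq> b0"
      and ab': "a' < 3" "b' < 3" "a' \<noteq> a0" "b' \<noteq> b0"
      using a12(2) b12(2) by blast+
    ultimately show "{{(a0, b), X a b}, {X a b, Y a b}, {Y a b, (a, b0)}} \<inter>
        {{(a0, b'), X a' b'}, {X a' b', Y a' b'}, {Y a' b', (a', b0)}} = {}"
      using detours_disjoint[OF ab ab'] XY[OF ab] XY[OF ab'] by (simp add: path_edges_four)
  qed
qed

end

lemma not_has_toi_rook_graph_3_3: "\<not> has_toi (rook_graph 3 3) 5"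
proof
  assume "has_toi (rook_graph 3 3) 5"
  then obtain \<pi> P where imm: "totally_odd_strong_immersion (rook_graph 3 3) 5 \<pi> P"
    by (auto simp: has_toi_def)
  then interpret saturated_immersion "rook_graph 3 3" 5 \<pi> P
    by (rule saturated_immersion_rook_graph) simp
  have "terminals \<subseteq> {..<3} \<times> {..<3}"
    using terminals_subset_verts by (simp add: verts_rook_graph)
  moreover have "card terminals = 5"
    using card_image[OF inj_on_terminal] by simp
  moreover have "card (terminals \<inter> neighbours (rook_graph 3 3) w) \<le> 2"
    if w: "w \<in> {..<3} \<times> {..<3} - terminals" for w
  proof -
    obtain x y where "w = (x, y)" "x < 3" "y < 3" using w by auto
    then have "card (neighbours (rook_graph 3 3) w) = 4" by (simp add: card_neighbours_rook_graph)
    with card_terminal_neighbours_half[of w] w show ?thesis by simp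
  qed
  ultimately have "\<exists>a0<3. \<exists>b0<3. terminals = {c \<in> {..<3} \<times> {..<3}. fst c = a0 \<or> snd c = b0}"
    by (rule rook_3_3_cross)
  then obtain a0 b0 where "a0 < 3" "b0 < 3"
    and "terminals = {c \<in> {..<3} \<times> {..<3}. fst c = a0 \<or> snd c = b0}"
    by blast
  then interpret cross_immersion_3_3 \<pi> P a0 b0
    by unfold_locales
  show False by (rule impossible)
qed

theorem mainTheorem8:
  fixes t s :: nat
  shows "(2 \<le> t \<and> 2 \<le> s \<and> max s t \<ge> 4 \<longrightarrow>
            toi (cart_prod (complete_graph t) (complete_graph s)) = t + s - 1) \<and>
         (s = 3 \<and> t = 3 \<longrightarrow> toi (cart_prod (complete_graph t) (complete_graph s)) = 4) \<and>
         (s = 3 \<and> t = 2 \<longrightarrow> toi (cart_prod (complete_graph t) (complete_graph s)) = 3)"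
proof (intro conjI impI)
  assume "2 \<le> t \<and> 2 \<le> s \<and> max s t \<ge> 4"
  then show "toi (rook_graph t s) = t + s - 1"
    using has_toi_rook_graph_large has_toi_rook_graph_le by (intro toi_eqI) auto
next
  assume "s = 3 \<and> t = 3"
  moreover have "k \<le> 4" if "has_toi (rook_graph 3 3) k" for k
    using has_toi_rook_graph_le[OF that] not_has_toi_rook_graph_3_3 that by (cases "k = 5") auto
  ultimately show "toi (rook_graph t s) = 4"
    using has_toi_rook_graph_3_3 by (auto intro: toi_eqI)
next
  assume "s = 3 \<and> t = 2"
  moreover have "k \<le> 3" if "has_toi (rook_graph 2 3) k" for k
    using has_toi_rook_graph_le[OF that] not_has_toi_rook_graph_2_3 that by (cases "k = 4") auto
  ultimately show "toi (rook_graph t s) = 3"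
    using has_toi_rook_graph_row[of 2 3] by (auto intro: toi_eqI)
qed

end
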